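(* Let $G$ be a primitive strongly regular graph with parameters $(v,k,\lambda,\mu)$. Then $|\lambda-\mu|<v^{3/4}$.
   Context: A graph is strongly regular with parameters $(v,k,\lambda,\mu)$ if it is a $k$-regular graph on $v$ vertices such that each edge lies in exactly $\lambda$ triangles and any two distinct non-adjacent vertices have exactly $\mu$ common neighbours; complete and edgeless graphs are excluded. A strongly regular graph is primitive if both it and its complement are connected. *)

theory Defs
  imports Complex_Main
begin

definition simple_graph :: "'a set \<Rightarrow> ('a \<Rightarrow> 'a \<Rightarrow> bool) \<Rightarrow> bool" where
  "simple_graph V E \<longleftrightarrow> finite V \<and> (\<forall>x y. E x y \<longrightarrow> x \<in> V \<and> y \<in> V)
     \<and> (\<forall>x y. E x y \<longrightarrow> E y x) \<and> (\<forall>x. \<not> E x x)"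

definition neighbours :: "'a set \<Rightarrow> ('a \<Rightarrow> 'a \<Rightarrow> bool) \<Rightarrow> 'a \<Rightarrow> 'a set" where
  "neighbours V E x = {y \<in> V. E x y}"

definition complement_graph :: "'a set \<Rightarrow> ('a \<Rightarrow> 'a \<Rightarrow> bool) \<Rightarrow> ('a \<Rightarrow> 'a \<Rightarrow> bool)" where
  "complement_graph V E = (\<lambda>x y. x \<in> V \<and> y \<in> V \<and> x \<noteq> y \<and> \<not> E x y)"

text \<open>Connectedness: every two vertices are joined by a walk (reflexive transitive
  closure of adjacency). The empty graph is not considered (V is nonempty below).\<close>
definition connected_graph :: "'a set \<Rightarrow> ('a \<Rightarrow> 'a \<Rightarrow> bool) \<Rightarrow> bool" where
  "connected_graph V E \<longleftrightarrow> (\<forall>x\<in>V. \<forall>y\<in>V. (E\<^sup>*\<^sup>*) x y)"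

definition srg :: "'a set \<Rightarrow> ('a \<Rightarrow> 'a \<Rightarrow> bool) \<Rightarrow> nat \<Rightarrow> nat \<Rightarrow> nat \<Rightarrow> nat \<Rightarrow> bool" where
  "srg V E v k l m \<longleftrightarrow> simple_graph V E \<and> card V = v
     \<and> (\<forall>x\<in>V. card (neighbours V E x) = k)
     \<and> (\<forall>x\<in>V. \<forall>y\<in>V. E x y \<longrightarrow> card (neighbours V E x \<inter> neighbours V E y) = l)
     \<and> (\<forall>x\<in>V. \<forall>y\<in>V. x \<noteq> y \<longrightarrow> \<not> E x y \<longrightarrow> card (neighbours V E x \<inter> neighbours V E y) = m)
     \<and> (\<exists>x y. E x y)
     \<and> (\<exists>x\<in>V. \<exists>y\<in>V. x \<noteq> y \<and> \<not> E x y)"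

definition primitive_srg :: "'a set \<Rightarrow> ('a \<Rightarrow> 'a \<Rightarrow> bool) \<Rightarrow> nat \<Rightarrow> nat \<Rightarrow> nat \<Rightarrow> nat \<Rightarrow> bool" where
  "primitive_srg V E v k l m \<longleftrightarrow> srg V E v k l m \<and> connected_graph V E
     \<and> connected_graph V (complement_graph V E)"

end

theory Submission
  imports Defs "HOL-Library.Function_Algebras"
begin

(*
  Let rho > 0 > sigma be the eigenvalues of the adjacency matrix A other than k, so that
  rho + sigma = lambda - mu and rho * sigma = mu - k, and let f be the multiplicity of rho.
  The orthogonal projection P onto the rho-eigenspace is a combination of I, A and the all-ones
  matrix, so its rows are v vectors in an f-dimensional space having a common norm and only two
  mutual inner products, one for edges and one for non-edges.  Primitivity gives sigma <> 0, -1,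
  which separates the norm from both inner products, and the polynomial method then yields the
  absolute bound v <= f^2 + f + 1.  The trace of A^2 gives f * rho^2 <= k (v - k) <= v^2 / 4, and
  together with the absolute bound this forces |rho| < v^(3/4).  The same holds for sigma, and
  |lambda - mu| = |rho + sigma| <= max |rho| |sigma| since the signs are opposite.
*)

section \<open>Orthonormal expansions of real functions on a finite set\<close>

definition inner_on :: "'a set \<Rightarrow> ('a \<Rightarrow> real) \<Rightarrow> ('a \<Rightarrow> real) \<Rightarrow> real" where
  "inner_on V f g = (\<Sum>x\<in>V. f x * g x)"

lemma inner_on_commute: "inner_on V f g = inner_on V g f"
  unfolding inner_on_def by (simp add: mult.commute)

lemma inner_on_cong_left: "(\<And>x. x \<in> V \<Longrightarrow> f x = f' x) \<Longrightarrow> inner_on V f g = inner_on V f' g"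
  unfolding inner_on_def by simp

lemma inner_on_add_left: "inner_on V (\<lambda>x. f x + h x) g = inner_on V f g + inner_on V h g"
  unfolding inner_on_def by (simp add: algebra_simps sum.distrib)

lemma inner_on_diff_left: "inner_on V (\<lambda>x. f x - h x) g = inner_on V f g - inner_on V h g"
  unfolding inner_on_def by (simp add: algebra_simps sum_subtractf)

lemma inner_on_scale_left: "inner_on V (\<lambda>x. a * f x) g = a * inner_on V f g"
  unfolding inner_on_def by (simp add: sum_distrib_left mult.assoc)

lemma inner_on_sum_left:
  "inner_on V (\<lambda>x. \<Sum>q\<in>B. c q * h q x) g = (\<Sum>q\<in>B. c q * inner_on V (h q) g)"
  unfolding inner_on_def by (simp add: sum_distrib_right sum_distrib_left mult.assoc) (rule sum.swap)

lemma inner_on_self_nonneg: "inner_on V f f \<ge> 0"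
  unfolding inner_on_def by (simp add: sum_nonneg)

lemma inner_on_self_eq_0: "finite V \<Longrightarrow> inner_on V f f = 0 \<Longrightarrow> x \<in> V \<Longrightarrow> f x = 0"
  unfolding inner_on_def by (simp add: sum_nonneg_eq_0_iff)

definition orthonormal_on :: "'a set \<Rightarrow> ('a \<Rightarrow> real) set \<Rightarrow> bool" where
  "orthonormal_on V B \<longleftrightarrow> (\<forall>q\<in>B. inner_on V q q = 1)
     \<and> (\<forall>q\<in>B. \<forall>q'\<in>B. q \<noteq> q' \<longrightarrow> inner_on V q q' = 0)"

definition has_expansion :: "'a set \<Rightarrow> ('a \<Rightarrow> real) set \<Rightarrow> ('a \<Rightarrow> real) \<Rightarrow> bool" where
  "has_expansion V B w \<longleftrightarrow> (\<forall>x\<in>V. w x = (\<Sum>q\<in>B. inner_on V w q * q x))"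

lemma orthonormal_on_sum_inner:
  assumes "orthonormal_on V B" "finite B" "q \<in> B"
  shows "(\<Sum>q'\<in>B. c q' * inner_on V q' q) = c q"
proof -
  have "(\<Sum>q'\<in>B. c q' * inner_on V q' q) = c q * inner_on V q q + (\<Sum>q'\<in>B - {q}. c q' * inner_on V q' q)"
    using assms(2,3) by (simp add: sum.remove)
  also have "(\<Sum>q'\<in>B - {q}. c q' * inner_on V q' q) = 0"
    using assms(1,3) unfolding orthonormal_on_def by (intro sum.neutral) auto
  finally show ?thesis using assms(1,3) unfolding orthonormal_on_def by simp
qed

lemma inner_on_expansion_left:
  assumes "has_expansion V B w"
  shows "inner_on V w g = (\<Sum>q\<in>B. inner_on V w q * inner_on V q g)"
proof -
  have "inner_on V w g = inner_on V (\<lambda>x. \<Sum>q\<in>B. inner_on V w q * q x) g"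
    using assms unfolding has_expansion_def by (intro inner_on_cong_left) auto
  then show ?thesis by (simp add: inner_on_sum_left)
qed

lemma parseval:
  assumes "has_expansion V B w"
  shows "inner_on V w w = (\<Sum>q\<in>B. (inner_on V w q)\<^sup>2)"
proof -
  have "inner_on V w w = (\<Sum>q\<in>B. inner_on V w q * inner_on V q w)"
    by (rule inner_on_expansion_left[OF assms])
  also have "\<dots> = (\<Sum>q\<in>B. (inner_on V w q)\<^sup>2)"
    by (intro sum.cong refl) (metis inner_on_commute power2_eq_square)
  finally show ?thesis .
qed

lemma has_expansion_insert_orthogonal:
  assumes "has_expansion V B w" "finite B" "q \<notin> B" "\<And>p. p \<in> B \<Longrightarrow> inner_on V p q = 0"
  shows "has_expansion V (insert q B) w"
proof -
  have "inner_on V w q = (\<Sum>p\<in>B. inner_on V w p * inner_on V p q)"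
    by (rule inner_on_expansion_left[OF assms(1)])
  also have "\<dots> = 0" using assms(4) by simp
  finally have "inner_on V w q = 0" .
  then show ?thesis using assms(1-3) by (simp add: has_expansion_def)
qed

lemma orthonormal_on_insert_normalized:
  assumes "orthonormal_on V B" "\<And>p. p \<in> B \<Longrightarrow> inner_on V p w = 0" "inner_on V w w \<noteq> 0"
  defines "q \<equiv> \<lambda>x. (1 / sqrt (inner_on V w w)) * w x"
  shows "orthonormal_on V (insert q B)" "q \<notin> B" "\<And>p. p \<in> B \<Longrightarrow> inner_on V p q = 0"
    "inner_on V w q = sqrt (inner_on V w w)"
proof -
  define n where "n = sqrt (inner_on V w w)"
  have n: "n > 0" "n * n = inner_on V w w"
    using assms(3) inner_on_self_nonneg[of V w] by (auto simp: n_def)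
  have q: "q = (\<lambda>x. (1 / n) * w x)" by (simp add: q_def n_def)
  have "inner_on V q w = n"
    using n unfolding q inner_on_scale_left n(2)[symmetric] by simp
  then show w_q: "inner_on V w q = n" by (simp add: inner_on_commute)
  show orth: "inner_on V p q = 0" if "p \<in> B" for p
    using assms(2)[OF that] unfolding inner_on_commute[of V p] q inner_on_scale_left by simp
  have unit: "inner_on V q q = 1"
    using w_q n unfolding q inner_on_scale_left by simp
  then show "q \<notin> B" using orth by force
  show "orthonormal_on V (insert q B)"
    using assms(1) unit orth by (auto simp: orthonormal_on_def inner_on_commute)
qed

lemma gram_schmidt_step:
  fixes Q :: "('a \<Rightarrow> real) \<Rightarrow> bool"
  assumes "finite V" "finite B" "orthonormal_on V B" "\<forall>q\<in>B. Q q" "Q u"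
    and Q_diff: "\<And>u B c. Q u \<Longrightarrow> \<forall>q\<in>B. Q q \<Longrightarrow> Q (\<lambda>x. u x - (\<Sum>q\<in>B. c q * q x))"
    and Q_scale: "\<And>u a. Q u \<Longrightarrow> Q (\<lambda>x. a * u x)"
  obtains B' where "finite B'" "\<forall>q\<in>B'. Q q" "orthonormal_on V B'" "has_expansion V B' u"
    "\<And>w. has_expansion V B w \<Longrightarrow> has_expansion V B' w"
proof -
  define w where "w = (\<lambda>x. u x - (\<Sum>q\<in>B. inner_on V u q * q x))"
  have w_orth: "inner_on V p w = 0" if "p \<in> B" for p
    using orthonormal_on_sum_inner[OF assms(3,2) that]
    by (simp add: inner_on_commute[of V p] w_def inner_on_diff_left inner_on_sum_left)
  show ?thesis
  proof (cases "inner_on V w w = 0")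
    case True
    then have "has_expansion V B u"
      using inner_on_self_eq_0[OF assms(1) True] by (simp add: has_expansion_def w_def)
    then show ?thesis using that assms(2-4) by blast
  next
    case False
    define q where "q = (\<lambda>x. (1 / sqrt (inner_on V w w)) * w x)"
    note q = orthonormal_on_insert_normalized[OF assms(3) w_orth False, folded q_def]
    have "Q w" unfolding w_def by (rule Q_diff[OF assms(5,4)])
    then have "Q q" unfolding q_def by (rule Q_scale)
    moreover have "has_expansion V (insert q B) u"
    proof -
      have "inner_on V u q = inner_on V (\<lambda>x. w x + (\<Sum>p\<in>B. inner_on V u p * p x)) q"
        by (intro inner_on_cong_left) (simp add: w_def)
      also have "\<dots> = sqrt (inner_on V w w)"
        using q(3,4) by (simp add: inner_on_add_left inner_on_sum_left)
      finally have "inner_on V u q * q x = w x" for x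
        using False inner_on_self_nonneg[of V w] by (simp add: q_def)
      then show ?thesis using assms(2) q(2) by (simp add: has_expansion_def w_def)
    qed
    ultimately show ?thesis
      using assms(2,4) q(1,2) has_expansion_insert_orthogonal[OF _ assms(2) q(2,3)]
      by (intro that[of "insert q B"]) auto
  qed
qed

lemma gram_schmidt:
  fixes U :: "('a \<Rightarrow> real) set" and Q :: "('a \<Rightarrow> real) \<Rightarrow> bool"
  assumes "finite V" "finite U" "\<forall>u\<in>U. Q u"
    and Q_diff: "\<And>u B c. Q u \<Longrightarrow> \<forall>q\<in>B. Q q \<Longrightarrow> Q (\<lambda>x. u x - (\<Sum>q\<in>B. c q * q x))"
    and Q_scale: "\<And>u a. Q u \<Longrightarrow> Q (\<lambda>x. a * u x)"
  obtains B where "finite B" "\<forall>q\<in>B. Q q" "orthonormal_on V B" "\<forall>u\<in>U. has_expansion V B u"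
proof -
  have "\<exists>B. finite B \<and> (\<forall>q\<in>B. Q q) \<and> orthonormal_on V B \<and> (\<forall>u\<in>U. has_expansion V B u)"
    using assms(2,3)
  proof (induction U rule: finite_induct)
    case empty
    show ?case by (rule exI[of _ "{}"]) (auto simp: orthonormal_on_def)
  next
    case (insert u U)
    then obtain B where B: "finite B" "\<forall>q\<in>B. Q q" "orthonormal_on V B"
      and expand: "\<forall>w\<in>U. has_expansion V B w"
      by auto
    obtain B' where "finite B'" "\<forall>q\<in>B'. Q q" "orthonormal_on V B'" "has_expansion V B' u"
      and "\<And>w. has_expansion V B w \<Longrightarrow> has_expansion V B' w"
      using gram_schmidt_step[OF assms(1) B(1,3,2) _ Q_diff Q_scale, of u] insert.prems by blast
    then show ?case using expand by (intro exI[of _ B']) auto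
  qed
  then show ?thesis using that by blast
qed

section \<open>The polynomial method for two-distance sets\<close>

lemma sum_apply: "sum f A x = (\<Sum>i\<in>A. f i x)"
  by (induction A rule: infinite_finite_induct) auto

interpretation real_fun: vector_space "(\<lambda>c f x. c * f x) :: real \<Rightarrow> ('b \<Rightarrow> real) \<Rightarrow> 'b \<Rightarrow> real"
  by unfold_locales (auto simp: fun_eq_iff algebra_simps)

lemma independent_if_diagonal_evaluation:
  fixes F :: "'a \<Rightarrow> 'b \<Rightarrow> real" and p :: "'a \<Rightarrow> 'b"
  assumes "finite V"
    and off_diag: "\<And>x y. x \<in> V \<Longrightarrow> y \<in> V \<Longrightarrow> x \<noteq> y \<Longrightarrow> F x (p y) = 0"
    and diag: "\<And>x. x \<in> V \<Longrightarrow> F x (p x) \<noteq> 0"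
  shows "inj_on F V" and "real_fun.independent (F ` V)"
proof -
  show inj: "inj_on F V"
    by (rule inj_onI) (metis off_diag diag)
  show "real_fun.independent (F ` V)"
  proof (rule real_fun.independent_if_scalars_zero)
    show "finite (F ` V)" using assms(1) by simp
  next
    fix c G assume comb: "(\<Sum>G\<in>F ` V. (\<lambda>z. c G * G z)) = 0" and "G \<in> F ` V"
    then obtain y where y: "y \<in> V" "G = F y" by auto
    have "0 = (\<Sum>x\<in>V. c (F x) * F x (p y))"
      using arg_cong[OF comb, of "\<lambda>f. f (p y)"] by (simp add: sum_apply sum.reindex[OF inj])
    also have "\<dots> = c (F y) * F y (p y)"
      using assms(1) y(1) off_diag by (subst sum.remove[of _ y]) (auto intro!: sum.neutral)
    finally show "c G = 0" using diag[OF y(1)] y(2) by simp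
  qed
qed

lemma product_of_affine_in_span:
  fixes h :: "'c \<Rightarrow> 'b \<Rightarrow> real"
  assumes "finite B"
  shows "(\<lambda>z. ((\<Sum>q\<in>B. c q * h q z) - \<beta>) * ((\<Sum>q\<in>B. c q * h q z) - \<gamma>))
    \<in> real_fun.span ((\<lambda>(p, q) z. h p z * h q z) ` (B \<times> B) \<union> h ` B \<union> {\<lambda>z. 1})"
    (is "_ \<in> real_fun.span ?S")
proof -
  have "((\<Sum>q\<in>B. c q * h q z) - \<beta>) * ((\<Sum>q\<in>B. c q * h q z) - \<gamma>)
      = (\<Sum>(p, q)\<in>B \<times> B. c p * c q * (h p z * h q z))
        + (\<Sum>q\<in>B. (- (\<beta> + \<gamma>) * c q) * h q z) + \<beta> * \<gamma>" for z
  proof -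
    have "(\<Sum>q\<in>B. c q * h q z) * (\<Sum>q\<in>B. c q * h q z)
        = (\<Sum>(p, q)\<in>B \<times> B. c p * c q * (h p z * h q z))"
      by (simp add: sum_product sum.cartesian_product case_prod_beta algebra_simps)
    moreover have "(\<Sum>q\<in>B. (- (\<beta> + \<gamma>) * c q) * h q z) = - (\<beta> + \<gamma>) * (\<Sum>q\<in>B. c q * h q z)"
      by (simp add: sum_distrib_left mult.assoc)
    ultimately show ?thesis by (simp add: algebra_simps)
  qed
  then have "(\<lambda>z. ((\<Sum>q\<in>B. c q * h q z) - \<beta>) * ((\<Sum>q\<in>B. c q * h q z) - \<gamma>))
      = (\<Sum>(p, q)\<in>B \<times> B. (\<lambda>z. (c p * c q) * (h p z * h q z)))
        + (\<Sum>q\<in>B. (\<lambda>z. (- (\<beta> + \<gamma>) * c q) * h q z)) + (\<lambda>z. \<beta> * \<gamma>)"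
    by (simp add: fun_eq_iff sum_apply case_prod_beta)
  also have "\<dots> \<in> real_fun.span ?S"
  proof -
    have "(\<lambda>z. h p z * h q z) \<in> real_fun.span ?S" if "p \<in> B" "q \<in> B" for p q
      using that by (intro real_fun.span_base) force
    moreover have "h q \<in> real_fun.span ?S" if "q \<in> B" for q
      using that by (intro real_fun.span_base) auto
    moreover have "(\<lambda>z. \<beta> * \<gamma>) \<in> real_fun.span ?S"
      using real_fun.span_scale[OF real_fun.span_base, of "\<lambda>z. 1" ?S "\<beta> * \<gamma>"] by simp
    ultimately show ?thesis
      by (intro real_fun.span_add real_fun.span_sum) (auto intro: real_fun.span_scale)
  qed
  finally show ?thesis .
qed

(* The absolute bound of Delsarte, Goethals and Seidel for two-distance sets, in the cruder
   form f^2 + f + 1 obtained from all products of coordinates. *)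
lemma two_distance_card_le:
  fixes u :: "'a \<Rightarrow> 'a \<Rightarrow> real"
  assumes "finite V" "finite B"
    and expand: "\<And>x. x \<in> V \<Longrightarrow> has_expansion V B (u x)"
    and off_diag: "\<And>x y. x \<in> V \<Longrightarrow> y \<in> V \<Longrightarrow> x \<noteq> y \<Longrightarrow> inner_on V (u x) (u y) \<in> {\<beta>, \<gamma>}"
    and diag: "\<And>x. x \<in> V \<Longrightarrow> inner_on V (u x) (u x) \<notin> {\<beta>, \<gamma>}"
  shows "card V \<le> card B * card B + card B + 1"
proof -
  define F where "F x z = (inner_on V (u x) z - \<beta>) * (inner_on V (u x) z - \<gamma>)" for x z
  define S where "S = (\<lambda>(p, q) z. inner_on V p z * inner_on V q z) ` (B \<times> B)
    \<union> inner_on V ` B \<union> {\<lambda>z. 1}"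
  have "F x \<in> real_fun.span S" if "x \<in> V" for x
  proof -
    define L where "L z = (\<Sum>q\<in>B. inner_on V (u x) q * inner_on V q z)" for z
    have "inner_on V (u x) z = L z" for z
      unfolding L_def by (rule inner_on_expansion_left[OF expand[OF that]])
    then have "F x = (\<lambda>z. (L z - \<beta>) * (L z - \<gamma>))"
      by (simp add: F_def[abs_def])
    then show ?thesis
      using product_of_affine_in_span[OF assms(2)] unfolding S_def L_def by simp
  qed
  then have span: "F ` V \<subseteq> real_fun.span S" by auto
  have "F x (u y) = 0" if "x \<in> V" "y \<in> V" "x \<noteq> y" for x y
    using off_diag[OF that] by (auto simp: F_def)
  moreover have "F x (u x) \<noteq> 0" if "x \<in> V" for x
    using diag[OF that] by (simp add: F_def)
  ultimately have inj: "inj_on F V" and indep: "real_fun.independent (F ` V)"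
    using independent_if_diagonal_evaluation[OF assms(1), of F u] by auto
  have "finite S" unfolding S_def using assms(2) by simp
  then have "card (F ` V) \<le> card S"
    using real_fun.independent_span_bound[OF _ indep span] by simp
  also have "card S \<le> card B * card B + card B + 1"
  proof -
    have "card S \<le> card ((\<lambda>(p, q) z. inner_on V p z * inner_on V q z) ` (B \<times> B))
        + card (inner_on V ` B) + card {\<lambda>z::'a \<Rightarrow> real. 1::real}"
      unfolding S_def by (meson card_Un_le add_mono le_trans order_refl)
    also have "\<dots> \<le> card (B \<times> B) + card B + 1"
      using assms(2) by (intro add_mono card_image_le) auto
    finally show ?thesis by (simp add: card_cartesian_product)
  qed
  finally show ?thesis using card_image[OF inj] by simp
qed

lemma quadratic_roots_opposite_signs:
  fixes b c :: real
  assumes "c > 0"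
  obtains \<rho> \<sigma> where "\<rho> + \<sigma> = b" "\<rho> * \<sigma> = - c" "\<sigma> < 0" "0 < \<rho>"
proof -
  define d where "d = sqrt (b\<^sup>2 + 4 * c)"
  have "d * d = b\<^sup>2 + 4 * c" using assms by (simp add: d_def)
  moreover have "\<bar>b\<bar> < d"
    using assms unfolding d_def by (intro real_less_rsqrt) simp
  ultimately show ?thesis
    by (intro that[of "(b + d) / 2" "(b - d) / 2"]) (auto simp: field_simps power2_eq_square)
qed

(* If rho^2 >= v^(3/2) then f <= sqrt v / 4, which is too small for v <= f^2 + f + 1. *)
lemma abs_less_powr_three_quarters:
  fixes v f \<rho> :: real
  assumes "v \<ge> 2" "f \<ge> 0" "v \<le> f\<^sup>2 + f + 1" "f * \<rho>\<^sup>2 \<le> v\<^sup>2 / 4"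
  shows "\<bar>\<rho>\<bar> < v powr (3/4)"
proof (rule ccontr)
  define t where "t = sqrt v"
  have t: "t * t = v" "t \<ge> 1.4" "t > 0"
    using assms(1) real_le_rsqrt[of "1.4" v] by (auto simp: t_def power2_eq_square)
  have "v powr (3/4) * v powr (3/4) = v * t"
  proof -
    have "v powr (3/4) * v powr (3/4) = v powr (1 + 1/2)"
      by (simp flip: powr_add)
    also have "\<dots> = v * t"
      using assms(1) powr_add[of v 1 "1/2"] by (simp add: powr_half_sqrt t_def)
    finally show ?thesis .
  qed
  moreover assume "\<not> \<bar>\<rho>\<bar> < v powr (3/4)"
  then have "v powr (3/4) * v powr (3/4) \<le> \<bar>\<rho>\<bar> * \<bar>\<rho>\<bar>"
    by (intro mult_mono) auto
  ultimately have "v * t \<le> \<rho>\<^sup>2"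
    by (simp add: power2_eq_square)
  then have "f * (v * t) \<le> v\<^sup>2 / 4"
    using assms(2,4) by (meson mult_left_mono order_trans)
  then have "v * (f * t) \<le> v * (t * t / 4)"
    using t(1) by (simp add: power2_eq_square algebra_simps)
  then have "f * t \<le> t * t / 4"
    using assms(1) by simp
  then have "f \<le> t / 4"
    using t(3) by (simp add: field_simps)
  then have "f\<^sup>2 + f + 1 \<le> (t / 4)\<^sup>2 + t / 4 + 1"
    using assms(2) by (intro add_mono power_mono) auto
  also have "\<dots> < t * t"
  proof -
    have "t * 1.4 \<le> t * t" using t by (intro mult_left_mono) auto
    then show ?thesis using t by (simp add: power2_eq_square)
  qed
  finally show False using assms(3) t(1) by simp
qed

section \<open>Strongly regular graphs\<close>

locale strongly_regular =
  fixes V :: "'a set" and E :: "'a \<Rightarrow> 'a \<Rightarrow> bool" and v k l m :: nat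
  assumes srg: "srg V E v k l m"
begin

lemma finite_V: "finite V"
  and adj_sym: "E x y \<Longrightarrow> E y x"
  and not_adj_self: "\<not> E x x"
  and adj_in_V: "E x y \<Longrightarrow> x \<in> V \<and> y \<in> V"
  using srg unfolding srg_def simple_graph_def by auto

lemma card_V: "card V = v"
  and card_neighbours: "x \<in> V \<Longrightarrow> card (neighbours V E x) = k"
  and card_common_adj:
    "x \<in> V \<Longrightarrow> y \<in> V \<Longrightarrow> E x y \<Longrightarrow> card (neighbours V E x \<inter> neighbours V E y) = l"
  and card_common_nonadj:
    "x \<in> V \<Longrightarrow> y \<in> V \<Longrightarrow> x \<noteq> y \<Longrightarrow> \<not> E x y \<Longrightarrow> card (neighbours V E x \<inter> neighbours V E y) = m"
  using srg unfolding srg_def by auto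

lemma finite_neighbours: "finite (neighbours V E x)"
  using finite_V unfolding neighbours_def by simp

lemma obtain_nonadjacent_pair:
  obtains x y where "x \<in> V" "y \<in> V" "x \<noteq> y" "\<not> E x y"
  using srg unfolding srg_def by auto

lemma v_ge_2: "v \<ge> 2"
proof -
  obtain x y where "x \<in> V" "y \<in> V" "x \<noteq> y" by (rule obtain_nonadjacent_pair)
  then have "card {x, y} \<le> card V" using finite_V by (intro card_mono) auto
  then show ?thesis using \<open>x \<noteq> y\<close> card_V by simp
qed

lemma v_pos: "real v > 0"
  using v_ge_2 by simp

lemma m_le_k: "m \<le> k"
proof -
  obtain x y where xy: "x \<in> V" "y \<in> V" "x \<noteq> y" "\<not> E x y" by (rule obtain_nonadjacent_pair)
  have "card (neighbours V E x \<inter> neighbours V E y) \<le> card (neighbours V E x)"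
    using finite_neighbours by (intro card_mono) auto
  then show ?thesis using card_common_nonadj[OF xy] card_neighbours[OF xy(1)] by simp
qed

lemma m_ne_k_if_complement_connected:
  assumes "connected_graph V (complement_graph V E)"
  shows "m \<noteq> k"
proof
  assume "m = k"
  let ?N = "neighbours V E"
  have step: "?N a = ?N b" if "complement_graph V E a b" for a b
  proof -
    have ab: "a \<in> V" "b \<in> V" "a \<noteq> b" "\<not> E a b"
      using that unfolding complement_graph_def by auto
    have common: "card (?N a \<inter> ?N b) = k" using card_common_nonadj[OF ab] \<open>m = k\<close> by simp
    have "?N a \<inter> ?N b = ?N a"
      by (rule card_subset_eq) (use finite_neighbours common card_neighbours[OF ab(1)] in auto)
    moreover have "?N a \<inter> ?N b = ?N b"
      by (rule card_subset_eq) (use finite_neighbours common card_neighbours[OF ab(2)] in auto)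
    ultimately show ?thesis by simp
  qed
  have walk: "(complement_graph V E)\<^sup>*\<^sup>* a b \<Longrightarrow> ?N a = ?N b" for a b
    by (induction rule: rtranclp_induct) (auto dest: step)
  obtain x y where "E x y" using srg unfolding srg_def by auto
  then have "x \<in> V" "y \<in> V" "y \<in> ?N x" using adj_in_V unfolding neighbours_def by auto
  with walk[of y x] assms have "y \<in> ?N y" unfolding connected_graph_def by auto
  then show False using not_adj_self unfolding neighbours_def by simp
qed

lemma Suc_l_ne_k_if_connected:
  assumes "connected_graph V E"
  shows "Suc l \<noteq> k"
proof
  assume "Suc l = k"
  let ?N = "neighbours V E"
  have closed_subset: "insert x (?N x) \<subseteq> insert y (?N y)" if "E x y" for x y
  proof -
    have xy: "x \<in> V" "y \<in> V" "y \<in> ?N x" "x \<in> ?N y"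
      using adj_in_V that adj_sym unfolding neighbours_def by auto
    have "?N x \<inter> ?N y \<subseteq> ?N x - {y}" using not_adj_self unfolding neighbours_def by auto
    moreover have "card (?N x - {y}) = card (?N x \<inter> ?N y)"
      using card_neighbours[OF xy(1)] card_common_adj[OF xy(1,2) that] xy(3) finite_neighbours
        \<open>Suc l = k\<close> by simp
    ultimately have "?N x \<inter> ?N y = ?N x - {y}"
      using finite_neighbours by (intro card_subset_eq) auto
    then show ?thesis using xy(4) by blast
  qed
  have walk: "E\<^sup>*\<^sup>* a b \<Longrightarrow> insert a (?N a) = insert b (?N b)" for a b
    by (induction rule: rtranclp_induct) (auto dest: closed_subset adj_sym)
  obtain x y where xy: "x \<in> V" "y \<in> V" "x \<noteq> y" "\<not> E x y" by (rule obtain_nonadjacent_pair)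
  with walk[of x y] assms have "y \<in> insert x (?N x)" unfolding connected_graph_def by auto
  then show False using xy unfolding neighbours_def by auto
qed

definition adj :: "'a \<Rightarrow> 'a \<Rightarrow> real" where
  "adj x y = of_bool (E x y)"

definition delta :: "'a \<Rightarrow> 'a \<Rightarrow> real" where
  "delta x y = of_bool (x = y)"

lemma adj_commute: "adj x y = adj y x"
  unfolding adj_def using adj_sym by auto

lemma row_sum_adj: "x \<in> V \<Longrightarrow> (\<Sum>z\<in>V. adj x z) = k"
  using finite_V card_neighbours[of x]
  by (simp add: adj_def sum.If_cases neighbours_def Int_def)

lemma column_sum_adj: "y \<in> V \<Longrightarrow> (\<Sum>z\<in>V. adj z y) = k"
  using row_sum_adj[of y] by (simp add: adj_commute)

lemma sum_adj_adj:
  assumes "x \<in> V" "y \<in> V"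
  shows "(\<Sum>z\<in>V. adj x z * adj z y) = m + (real k - m) * delta x y + (real l - m) * adj x y"
proof -
  have "(\<Sum>z\<in>V. adj x z * adj z y) = card (neighbours V E x \<inter> neighbours V E y)"
    using finite_V by (simp add: adj_def neighbours_def)
      (rule arg_cong[where f = card]; auto dest: adj_sym)
  then show ?thesis
    using assms card_neighbours card_common_adj card_common_nonadj not_adj_self
    by (cases "x = y"; cases "E x y") (auto simp: adj_def delta_def)
qed

lemma sum_delta_left:
  assumes "x \<in> V" shows "(\<Sum>z\<in>V. delta x z * f z) = f x"
proof -
  have "(\<Sum>z\<in>V. delta x z * f z) = (\<Sum>z\<in>V. if z = x then f z else 0)"
    by (intro sum.cong) (auto simp: delta_def)
  then show ?thesis using finite_V assms by simp
qed

lemma sum_delta_right: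
  assumes "y \<in> V" shows "(\<Sum>z\<in>V. f z * delta z y) = f y"
  using sum_delta_left[OF assms, of f] by (simp add: delta_def eq_commute mult.commute)

lemma sum_affine_square:
  fixes a b c :: real
  assumes "x \<in> V" "y \<in> V"
  shows "(\<Sum>z\<in>V. (a * adj x z + b * delta x z + c) * (a * adj z y + b * delta z y + c))
    = a\<^sup>2 * (m + (real k - m) * delta x y + (real l - m) * adj x y) + 2 * a * b * adj x y
      + 2 * a * c * k + b\<^sup>2 * delta x y + 2 * b * c + c\<^sup>2 * v"
proof -
  have "(\<Sum>z\<in>V. (a * adj x z + b * delta x z + c) * (a * adj z y + b * delta z y + c))
    = (\<Sum>z\<in>V. a\<^sup>2 * (adj x z * adj z y) + a * b * (adj x z * delta z y)
      + a * b * (delta x z * adj z y) + a * c * adj x z + a * c * adj z y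
      + b\<^sup>2 * (delta x z * delta z y) + b * c * (delta x z * 1) + b * c * (1 * delta z y) + c\<^sup>2)"
    by (intro sum.cong refl) (simp add: algebra_simps power2_eq_square)
  also have "\<dots> = a\<^sup>2 * (\<Sum>z\<in>V. adj x z * adj z y) + a * b * (\<Sum>z\<in>V. adj x z * delta z y)
      + a * b * (\<Sum>z\<in>V. delta x z * adj z y) + a * c * (\<Sum>z\<in>V. adj x z)
      + a * c * (\<Sum>z\<in>V. adj z y) + b\<^sup>2 * (\<Sum>z\<in>V. delta x z * delta z y)
      + b * c * (\<Sum>z\<in>V. delta x z * 1) + b * c * (\<Sum>z\<in>V. 1 * delta z y) + c\<^sup>2 * card V"
    by (simp only: sum.distrib sum_distrib_left[symmetric] sum_constant mult.commute[of _ "c\<^sup>2"])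
  also have "\<dots> = a\<^sup>2 * (m + (real k - m) * delta x y + (real l - m) * adj x y) + 2 * a * b * adj x y
      + 2 * a * c * k + b\<^sup>2 * delta x y + 2 * b * c + c\<^sup>2 * v"
    by (simp only: sum_adj_adj[OF assms] sum_delta_left[OF assms(1)] sum_delta_right[OF assms(2)]
        row_sum_adj[OF assms(1)] column_sum_adj[OF assms(2)] card_V)
  finally show ?thesis .
qed

lemma srg_parameter_identity: "real k * (real k - real l - 1) = real m * (real v - real k - 1)"
proof -
  obtain x where x: "x \<in> V" using obtain_nonadjacent_pair by metis
  have "(\<Sum>y\<in>V. \<Sum>z\<in>V. adj x z * adj z y) = (\<Sum>z\<in>V. adj x z * (\<Sum>y\<in>V. adj z y))"
    by (subst sum.swap) (simp add: sum_distrib_left)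
  also have "\<dots> = real k * k"
    using row_sum_adj[OF x] by (simp add: row_sum_adj sum_distrib_right[symmetric])
  finally have "(\<Sum>y\<in>V. \<Sum>z\<in>V. adj x z * adj z y) = real k * k" .
  moreover have "(\<Sum>y\<in>V. \<Sum>z\<in>V. adj x z * adj z y)
      = (\<Sum>y\<in>V. m + (real k - m) * delta x y + (real l - m) * adj x y)"
    using x by (intro sum.cong refl) (simp add: sum_adj_adj)
  moreover have "\<dots> = m * v + (real k - m) + (real l - m) * k"
    using sum_delta_left[OF x, of "\<lambda>_. 1"] row_sum_adj[OF x] card_V
    by (simp add: sum.distrib sum_distrib_left[symmetric])
  ultimately show ?thesis by (simp add: algebra_simps)
qed

end

section \<open>The projection onto an eigenspace\<close>

locale srg_eigenvalues = strongly_regular +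
  fixes \<rho> \<sigma> :: real
  assumes eigenvalue_sum: "\<rho> + \<sigma> = real l - real m"
    and eigenvalue_prod: "\<rho> * \<sigma> = real m - real k"
    and eigenvalues_distinct: "\<rho> \<noteq> \<sigma>"
begin

(* The orthogonal projection onto the rho-eigenspace of the adjacency matrix. *)
definition proj :: "'a \<Rightarrow> 'a \<Rightarrow> real" where
  "proj x y = (adj x y - \<sigma> * delta x y - (real k - \<sigma>) / real v) / (\<rho> - \<sigma>)"

(* The multiplicity of rho, i.e. the trace of proj. *)
definition mult :: real where
  "mult = (- \<sigma> * (real v - 1) - real k) / (\<rho> - \<sigma>)"

lemma proj_commute: "proj x y = proj y x"
  unfolding proj_def delta_def by (simp add: adj_commute eq_commute)

lemma proj_idempotent:
  assumes "x \<in> V" "y \<in> V"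
  shows "(\<Sum>z\<in>V. proj x z * proj z y) = proj x y"
proof -
  define \<theta> where "\<theta> = \<rho> - \<sigma>"
  define c where "c = (real k - \<sigma>) / real v"
  have \<theta>: "\<theta> \<noteq> 0" using eigenvalues_distinct by (simp add: \<theta>_def)
  have cv: "c * v = real k - \<sigma>" using v_pos by (simp add: c_def)
  have "real m * v = (real k - \<sigma>) * (real k - \<rho>)"
    using srg_parameter_identity eigenvalue_sum eigenvalue_prod by algebra
  then have "real m = (real k - \<sigma>) * (real k - \<rho>) / v"
    using v_pos by (simp add: eq_divide_eq)
  then have mc: "real m = c * (real k - \<rho>)" by (simp add: c_def)
  have proj_eq: "proj x y = (adj x y - \<sigma> * delta x y - c) / \<theta>" for x y
    by (simp add: proj_def \<theta>_def c_def)
  have "(\<Sum>z\<in>V. proj x z * proj z y) = (\<Sum>z\<in>V. (1 * adj x z + (- \<sigma>) * delta x z + (- c))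
      * (1 * adj z y + (- \<sigma>) * delta z y + (- c))) / \<theta>\<^sup>2"
    unfolding proj_eq sum_divide_distrib by (intro sum.cong refl) (simp add: power2_eq_square)
  also have "\<dots> = (m + (real k - m) * delta x y + (real l - m) * adj x y - 2 * \<sigma> * adj x y
      - 2 * c * k + \<sigma>\<^sup>2 * delta x y + 2 * \<sigma> * c + c\<^sup>2 * v) / \<theta>\<^sup>2"
    unfolding sum_affine_square[OF assms] by (simp add: power2_eq_square)
  also have "\<dots> = (\<theta> * (adj x y - \<sigma> * delta x y - c)) / \<theta>\<^sup>2"
  proof -
    have "m + (real k - m) * delta x y + (real l - m) * adj x y - 2 * \<sigma> * adj x y
      - 2 * c * k + \<sigma>\<^sup>2 * delta x y + 2 * \<sigma> * c + c\<^sup>2 * v = \<theta> * (adj x y - \<sigma> * delta x y - c)"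
      using cv mc eigenvalue_sum eigenvalue_prod unfolding \<theta>_def by algebra
    then show ?thesis by simp
  qed
  also have "\<dots> = proj x y"
    using \<theta> by (simp add: proj_eq power2_eq_square)
  finally show ?thesis .
qed

lemma inner_on_proj: "x \<in> V \<Longrightarrow> y \<in> V \<Longrightarrow> inner_on V (proj x) (proj y) = proj x y"
  unfolding inner_on_def by (simp add: proj_commute[of y] proj_idempotent)

lemma proj_diag: "proj x x = mult / v"
  using v_pos eigenvalues_distinct
  by (simp add: proj_def mult_def adj_def delta_def not_adj_self field_simps)

lemma proj_off_diagonal:
  "x \<noteq> y \<Longrightarrow> proj x y \<in> {(1 - (real k - \<sigma>) / v) / (\<rho> - \<sigma>), - ((real k - \<sigma>) / v) / (\<rho> - \<sigma>)}"
  by (cases "E x y") (simp_all add: proj_def adj_def delta_def)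

lemma proj_diag_not_off_diagonal:
  assumes "\<sigma> \<noteq> 0" "\<sigma> \<noteq> -1"
  shows "proj x x \<notin> {(1 - (real k - \<sigma>) / v) / (\<rho> - \<sigma>), - ((real k - \<sigma>) / v) / (\<rho> - \<sigma>)}"
proof -
  define t where "t = (real k - \<sigma>) / v"
  define \<theta> where "\<theta> = \<rho> - \<sigma>"
  have "\<theta> \<noteq> 0" using eigenvalues_distinct by (simp add: \<theta>_def)
  moreover have "proj x x = (- \<sigma> - t) / \<theta>"
    by (simp add: proj_def adj_def delta_def not_adj_self t_def \<theta>_def)
  ultimately show ?thesis
    using assms unfolding t_def[symmetric] \<theta>_def[symmetric] by (auto simp: divide_simps)
qed

lemma mult_nonneg: "mult \<ge> 0"
proof -
  obtain x where x: "x \<in> V" using obtain_nonadjacent_pair by metis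
  have "0 \<le> mult / v"
    using inner_on_proj[OF x x] proj_diag inner_on_self_nonneg[of V "proj x"] by simp
  then show ?thesis using v_pos by (simp add: zero_le_divide_iff)
qed

definition in_eigenspace :: "('a \<Rightarrow> real) \<Rightarrow> bool" where
  "in_eigenspace q \<longleftrightarrow> (\<forall>x\<in>V. inner_on V (proj x) q = q x)"

lemma in_eigenspace_proj: "y \<in> V \<Longrightarrow> in_eigenspace (proj y)"
  unfolding in_eigenspace_def by (simp add: inner_on_proj proj_commute)

lemma in_eigenspace_diff:
  assumes "in_eigenspace u" "\<forall>q\<in>B. in_eigenspace q"
  shows "in_eigenspace (\<lambda>z. u z - (\<Sum>q\<in>B. c q * q z))"
  unfolding in_eigenspace_def
proof
  fix x assume "x \<in> V"
  have "inner_on V (proj x) (\<lambda>z. u z - (\<Sum>q\<in>B. c q * q z))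
      = inner_on V (\<lambda>z. u z - (\<Sum>q\<in>B. c q * q z)) (proj x)"
    by (rule inner_on_commute)
  also have "\<dots> = inner_on V u (proj x) - (\<Sum>q\<in>B. c q * inner_on V q (proj x))"
    by (simp only: inner_on_diff_left inner_on_sum_left)
  also have "\<dots> = u x - (\<Sum>q\<in>B. c q * q x)"
    using assms \<open>x \<in> V\<close> unfolding in_eigenspace_def by (simp add: inner_on_commute)
  finally show "inner_on V (proj x) (\<lambda>z. u z - (\<Sum>q\<in>B. c q * q z)) = u x - (\<Sum>q\<in>B. c q * q x)" .
qed

lemma in_eigenspace_scale: "in_eigenspace u \<Longrightarrow> in_eigenspace (\<lambda>z. a * u z)"
  unfolding in_eigenspace_def
  by (simp add: inner_on_commute[of V "proj _" "\<lambda>z. a * u z"] inner_on_scale_left inner_on_commute)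

lemma card_orthonormal_eigenbasis:
  assumes "finite B" "orthonormal_on V B"
    and eigen: "\<forall>q\<in>B. in_eigenspace q"
    and expand: "\<forall>x\<in>V. has_expansion V B (proj x)"
  shows "real (card B) = mult"
proof -
  have "real (card B) = (\<Sum>q\<in>B. inner_on V q q)"
    using assms(2) by (simp add: orthonormal_on_def)
  also have "\<dots> = (\<Sum>q\<in>B. \<Sum>x\<in>V. (inner_on V (proj x) q)\<^sup>2)"
    using eigen by (auto simp: in_eigenspace_def inner_on_def power2_eq_square intro!: sum.cong)
  also have "\<dots> = (\<Sum>x\<in>V. \<Sum>q\<in>B. (inner_on V (proj x) q)\<^sup>2)"
    by (rule sum.swap)
  also have "\<dots> = (\<Sum>x\<in>V. inner_on V (proj x) (proj x))"
    using parseval[of V B "proj _"] expand by (intro sum.cong refl) simp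
  also have "\<dots> = mult"
    using v_pos by (simp add: inner_on_proj proj_diag card_V)
  finally show ?thesis .
qed

lemma absolute_bound:
  assumes "\<sigma> \<noteq> 0" "\<sigma> \<noteq> -1"
  shows "real v \<le> mult\<^sup>2 + mult + 1"
proof -
  obtain B where B: "finite B" "\<forall>q\<in>B. in_eigenspace q" "orthonormal_on V B"
    and expand: "\<forall>u\<in>proj ` V. has_expansion V B u"
    using gram_schmidt[OF finite_V finite_imageI[OF finite_V] _ in_eigenspace_diff in_eigenspace_scale]
      in_eigenspace_proj by blast
  then have "real (card B) = mult"
    by (intro card_orthonormal_eigenbasis) auto
  moreover have "card V \<le> card B * card B + card B + 1"
  proof (rule two_distance_card_le[OF finite_V B(1)])
    show "has_expansion V B (proj x)" if "x \<in> V" for x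
      using expand that by blast
    show "inner_on V (proj x) (proj y) \<in> {(1 - (real k - \<sigma>) / v) / (\<rho> - \<sigma>), - ((real k - \<sigma>) / v) / (\<rho> - \<sigma>)}"
      if "x \<in> V" "y \<in> V" "x \<noteq> y" for x y
      unfolding inner_on_proj[OF that(1,2)] by (rule proj_off_diagonal[OF that(3)])
    show "inner_on V (proj x) (proj x) \<notin> {(1 - (real k - \<sigma>) / v) / (\<rho> - \<sigma>), - ((real k - \<sigma>) / v) / (\<rho> - \<sigma>)}"
      if "x \<in> V" for x
      unfolding inner_on_proj[OF that that] by (rule proj_diag_not_off_diagonal[OF assms])
  qed
  ultimately show ?thesis
    using of_nat_mono[of "card V" "card B * card B + card B + 1", where 'a = real]
    by (simp add: card_V power2_eq_square)
qed

(* The trace of A^2: k^2 + f rho^2 + g sigma^2 = k v, where the second fraction is the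
   multiplicity g of sigma. *)
lemma mult_sum_squares:
  "mult * \<rho>\<^sup>2 + (- \<rho> * (real v - 1) - real k) / (\<sigma> - \<rho>) * \<sigma>\<^sup>2 = real k * (real v - real k)"
proof -
  have "\<rho> - \<sigma> \<noteq> 0" "\<sigma> - \<rho> \<noteq> 0" using eigenvalues_distinct by auto
  then have "mult * \<rho>\<^sup>2 + (- \<rho> * (real v - 1) - real k) / (\<sigma> - \<rho>) * \<sigma>\<^sup>2
      = - (real v - 1) * (\<rho> * \<sigma>) - real k * (\<rho> + \<sigma>)"
    unfolding mult_def by (simp add: divide_simps) (simp add: power2_eq_square algebra_simps)
  also have "\<dots> = real k * (real v - real k)"
    using srg_parameter_identity unfolding eigenvalue_sum eigenvalue_prod by algebra
  finally show ?thesis .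
qed

lemma sigma_ne_zero: "m \<noteq> k \<Longrightarrow> \<sigma> \<noteq> 0"
  using eigenvalue_prod by auto

lemma sigma_ne_minus_one: "Suc l \<noteq> k \<Longrightarrow> \<sigma> \<noteq> -1"
  using eigenvalue_sum eigenvalue_prod by auto

lemma abs_eigenvalue_less:
  assumes "m \<noteq> k" "Suc l \<noteq> k"
  shows "\<bar>\<rho>\<bar> < real v powr (3/4)"
proof (rule abs_less_powr_three_quarters)
  interpret dual: srg_eigenvalues V E v k l m \<sigma> \<rho>
    using srg eigenvalue_sum eigenvalue_prod eigenvalues_distinct
    by unfold_locales (auto simp: mult.commute)
  have "dual.mult * \<sigma>\<^sup>2 \<ge> 0" using dual.mult_nonneg by simp
  then have "mult * \<rho>\<^sup>2 \<le> real k * (real v - real k)"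
    using mult_sum_squares unfolding dual.mult_def by linarith
  also have "\<dots> \<le> (real v)\<^sup>2 / 4"
    using sum_squares_ge_zero[of "real v - 2 * real k" 0] by (simp add: power2_eq_square algebra_simps)
  finally show "mult * \<rho>\<^sup>2 \<le> (real v)\<^sup>2 / 4" .
  show "real v \<le> mult\<^sup>2 + mult + 1"
    using absolute_bound sigma_ne_zero sigma_ne_minus_one assms by blast
qed (use v_ge_2 mult_nonneg in auto)

end

theorem corollary1p4:
  fixes V :: "'a set" and E :: "'a \<Rightarrow> 'a \<Rightarrow> bool" and v k l m :: nat
  assumes "primitive_srg V E v k l m"
  shows "\<bar>real l - real m\<bar> < real v powr (3/4)"
proof -
  interpret strongly_regular V E v k l m
    using assms by unfold_locales (simp add: primitive_srg_def)
  have "m \<noteq> k" "Suc l \<noteq> k"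
    using assms m_ne_k_if_complement_connected Suc_l_ne_k_if_connected
    by (auto simp: primitive_srg_def)
  then have "real m < real k" using m_le_k by simp
  then obtain \<rho> \<sigma> where roots: "\<rho> + \<sigma> = real l - real m" "\<rho> * \<sigma> = real m - real k" "\<sigma> < 0" "0 < \<rho>"
    using quadratic_roots_opposite_signs[of "real k - real m" "real l - real m"] by auto
  interpret pos: srg_eigenvalues V E v k l m \<rho> \<sigma>
    using roots by unfold_locales auto
  interpret neg: srg_eigenvalues V E v k l m \<sigma> \<rho>
    using roots by unfold_locales (auto simp: mult.commute)
  have "\<bar>\<rho>\<bar> < real v powr (3/4)" "\<bar>\<sigma>\<bar> < real v powr (3/4)"
    using pos.abs_eigenvalue_less neg.abs_eigenvalue_less \<open>m \<noteq> k\<close> \<open>Suc l \<noteq> k\<close> by auto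
  then show ?thesis
    using roots by (auto simp: abs_if)
qed

end
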